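(* Let $E$ be a graph and let $G_E$ be the set of pairs $(p,q)$ of paths with $\mathbf{r}(p)=\mathbf{r}(q)$ (corresponding to the elements $pq^*$ of $L_K(E)$). Define $(pu,qu)\preceq(p,q)$ for every $(p,q)\in G_E$ and every path $u$ with $\mathbf{s}(u)=\mathbf{r}(p)$ ("$(pu,qu)$ reduces to $(p,q)$"). Call $(p,q)$ irreducible if $(p,q)\preceq(r,s)$ implies $p=r$ and $q=s$. Call two elements comparable, written $(p_1,q_1)\sim(p_2,q_2)$, if there are $(p,q)\in G_E$ and paths $u_1,u_2$ with $(p_1,q_1)=(pu_1,qu_1)$ and $(p_2,q_2)=(pu_2,qu_2)$. Then: (1) every element of $G_E$ reduces to a unique irreducible element; (2) two elements of $G_E$ are comparable if and only if they reduce to the same irreducible element, and this irreducible element is unique; (3) $\sim$ is an equivalence relation on $G_E$, and all elements of one equivalence class reduce to the same (unique) irreducible element; (4) if $t$ is a canonical trace on $L_K(E)$ (for some field $K$) and $(p,q),(r,s)\in G_E$ satisfy $t\big(pq^*(rs^* )^*\big)\neq0$, then $(p,q)\sim(r,s)$.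
   Context: A (directed) graph $E=(E^0,E^1,\mathbf{s},\mathbf{r})$ has vertex set $E^0$, edge set $E^1$, source and range maps; no finiteness or countability is assumed. A path is a vertex $v$ (length $0$, $\mathbf{s}(v)=\mathbf{r}(v)=v$) or a sequence $p=e_1\cdots e_n$ of edges with $\mathbf{r}(e_i)=\mathbf{s}(e_{i+1})$, length $|p|=n$, $\mathbf{s}(p)=\mathbf{s}(e_1)$, $\mathbf{r}(p)=\mathbf{r}(e_n)$; $pu$ denotes concatenation (with $pv=p$ for the vertex $v=\mathbf{r}(p)$). A vertex $v$ is regular if $\mathbf{s}^{-1}(v)$ is nonempty and finite. The Leavitt path algebra $L_K(E)$ over a field $K$ with involution is the free $K$-algebra generated by $E^0\cup E^1\cup\{e^*:e\in E^1\}$ subject to (V) $vw=\delta_{v,w}v$; (E1) $\mathbf{s}(e)e=e\mathbf{r}(e)=e$; (E2) $\mathbf{r}(e)e^*=e^*\mathbf{s}(e)=e^*$; (CK1) $e^*f=\delta_{e,f}\mathbf{r}(e)$; (CK2) $v=\sum_{e\in\mathbf{s}^{-1}(v)}ee^*$ for regular $v$; for a path $p=e_1\cdots e_n$, $p^*=e_n^*\cdots e_1^*$, $v^*=v$, and the involution is $(\sum a_ip_iq_i^* )^*=\sum a_i^*q_ip_i^*$. A trace is an additive map $t$ with $t(xy)=t(yx)$; a trace $t$ on $L_K(E)$ is canonical if $t(pq^* )=\delta_{p,q}\,t(\mathbf{r}(p))$ for all paths $p,q$ with $\mathbf{r}(p)=\mathbf{r}(q)$. *)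

theory Defs
  imports Main
begin

record ('v, 'e) graph =
  verts :: "'v set"
  edges :: "'e set"
  src   :: "'e \<Rightarrow> 'v"
  rng   :: "'e \<Rightarrow> 'v"

definition wf_graph :: "('v, 'e) graph \<Rightarrow> bool" where
  "wf_graph E \<longleftrightarrow> src E ` edges E \<subseteq> verts E \<and> rng E ` edges E \<subseteq> verts E"

text \<open>A path is either a vertex (length 0) or a nonempty list of composable edges.\<close>
datatype ('v, 'e) path = PV 'v | PE "'e list"

fun is_path :: "('v, 'e) graph \<Rightarrow> ('v, 'e) path \<Rightarrow> bool" where
  "is_path E (PV v) \<longleftrightarrow> v \<in> verts E"
| "is_path E (PE es) \<longleftrightarrow> es \<noteq> [] \<and> set es \<subseteq> edges E \<and>
     (\<forall>i. Suc i < length es \<longrightarrow> rng E (es ! i) = src E (es ! Suc i))"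

fun psrc :: "('v, 'e) graph \<Rightarrow> ('v, 'e) path \<Rightarrow> 'v" where
  "psrc E (PV v) = v"
| "psrc E (PE es) = src E (hd es)"

fun prng :: "('v, 'e) graph \<Rightarrow> ('v, 'e) path \<Rightarrow> 'v" where
  "prng E (PV v) = v"
| "prng E (PE es) = rng E (last es)"

text \<open>Concatenation \<open>p u\<close> (meaningful when \<open>r(p) = s(u)\<close>); a vertex acts as identity.\<close>
fun pconc :: "('v, 'e) path \<Rightarrow> ('v, 'e) path \<Rightarrow> ('v, 'e) path" where
  "pconc (PV v) u = u"
| "pconc (PE es) (PV v) = PE es"
| "pconc (PE es) (PE fs) = PE (es @ fs)"

definition GE :: "('v, 'e) graph \<Rightarrow> (('v, 'e) path \<times> ('v, 'e) path) set" where
  "GE E = {(p, q). is_path E p \<and> is_path E q \<and> prng E p = prng E q}"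

text \<open>\<open>reduces E x y\<close> means \<open>x \<preceq> y\<close>: \<open>y = (p,q) \<in> G_E\<close> and \<open>x = (pu, qu)\<close> for a path \<open>u\<close>
  with \<open>s(u) = r(p)\<close>.\<close>
definition reduces :: "('v, 'e) graph \<Rightarrow> ('v, 'e) path \<times> ('v, 'e) path
                        \<Rightarrow> ('v, 'e) path \<times> ('v, 'e) path \<Rightarrow> bool" where
  "reduces E x y \<longleftrightarrow> y \<in> GE E \<and>
     (\<exists>u. is_path E u \<and> psrc E u = prng E (fst y) \<and>
          x = (pconc (fst y) u, pconc (snd y) u))"

definition irreducible :: "('v, 'e) graph \<Rightarrow> ('v, 'e) path \<times> ('v, 'e) path \<Rightarrow> bool" where
  "irreducible E x \<longleftrightarrow> x \<in> GE E \<and> (\<forall>y. reduces E x y \<longrightarrow> y = x)"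

definition comparable :: "('v, 'e) graph \<Rightarrow> ('v, 'e) path \<times> ('v, 'e) path
                           \<Rightarrow> ('v, 'e) path \<times> ('v, 'e) path \<Rightarrow> bool" where
  "comparable E x y \<longleftrightarrow> (\<exists>p q u1 u2. (p, q) \<in> GE E \<and>
      is_path E u1 \<and> psrc E u1 = prng E p \<and> is_path E u2 \<and> psrc E u2 = prng E p \<and>
      x = (pconc p u1, pconc q u1) \<and> y = (pconc p u2, pconc q u2))"

definition comparable_rel :: "('v, 'e) graph \<Rightarrow> ((('v, 'e) path \<times> ('v, 'e) path) \<times> (('v, 'e) path \<times> ('v, 'e) path)) set" where
  "comparable_rel E = {(x, y). x \<in> GE E \<and> y \<in> GE E \<and> comparable E x y}"

text \<open>A Leavitt E-family in a ring: images of vertices \<open>Pv\<close>, edges \<open>Se\<close> and ghost edges \<open>Ss\<close>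
  satisfying the defining relations (V), (E1), (E2), (CK1), (CK2) of \<open>L_K(E)\<close>.\<close>
definition leavitt_family :: "('v, 'e) graph \<Rightarrow> ('v \<Rightarrow> 'a::ring) \<Rightarrow> ('e \<Rightarrow> 'a) \<Rightarrow> ('e \<Rightarrow> 'a) \<Rightarrow> bool" where
  "leavitt_family E Pv Se Ss \<longleftrightarrow>
     (\<forall>v\<in>verts E. \<forall>w\<in>verts E. Pv v * Pv w = (if v = w then Pv v else 0)) \<and>
     (\<forall>e\<in>edges E. Pv (src E e) * Se e = Se e \<and> Se e * Pv (rng E e) = Se e) \<and>
     (\<forall>e\<in>edges E. Pv (rng E e) * Ss e = Ss e \<and> Ss e * Pv (src E e) = Ss e) \<and>
     (\<forall>e\<in>edges E. \<forall>f\<in>edges E. Ss e * Se f = (if e = f then Pv (rng E e) else 0)) \<and>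
     (\<forall>v\<in>verts E. {e\<in>edges E. src E e = v} \<noteq> {} \<and> finite {e\<in>edges E. src E e = v} \<longrightarrow>
         Pv v = (\<Sum>e\<in>{e\<in>edges E. src E e = v}. Se e * Ss e))"

fun pel :: "('v \<Rightarrow> 'a::ring) \<Rightarrow> ('e \<Rightarrow> 'a) \<Rightarrow> ('v, 'e) path \<Rightarrow> 'a" where
  "pel Pv Se (PV v) = Pv v"
| "pel Pv Se (PE []) = 0"
| "pel Pv Se (PE (e # es)) = foldl (\<lambda>a f. a * Se f) (Se e) es"

fun pstar :: "('v \<Rightarrow> 'a::ring) \<Rightarrow> ('e \<Rightarrow> 'a) \<Rightarrow> ('v, 'e) path \<Rightarrow> 'a" where
  "pstar Pv Ss (PV v) = Pv v"
| "pstar Pv Ss (PE []) = 0"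
| "pstar Pv Ss (PE (e # es)) = foldl (\<lambda>a f. Ss f * a) (Ss e) es"

definition is_trace :: "('a::ring \<Rightarrow> 'b::ab_group_add) \<Rightarrow> bool" where
  "is_trace t \<longleftrightarrow> (\<forall>x y. t (x + y) = t x + t y) \<and> (\<forall>x y. t (x * y) = t (y * x))"

definition canonical_trace :: "('v, 'e) graph \<Rightarrow> ('v \<Rightarrow> 'a::ring) \<Rightarrow> ('e \<Rightarrow> 'a) \<Rightarrow> ('e \<Rightarrow> 'a)
                                \<Rightarrow> ('a \<Rightarrow> 'b::ab_group_add) \<Rightarrow> bool" where
  "canonical_trace E Pv Se Ss t \<longleftrightarrow> is_trace t \<and>
     (\<forall>p q. is_path E p \<and> is_path E q \<and> prng E p = prng E q \<longrightarrow>
        t (pel Pv Se p * pstar Pv Ss q) = (if p = q then t (Pv (prng E p)) else 0))"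

end

theory Submission
  imports Defs
begin

text \<open>A path is determined by its source and its list of edges, and \<open>(p u, q u) \<preceq> (p, q)\<close>
  says that the edge lists of the two components share the suffix \<open>u\<close>. If an element reduces to
  two elements, the shorter of the two suffixes is a suffix of the longer one, so the reducts of an
  element form a chain; it is finite because edge lists shrink along it, and its last member is the
  unique irreducible reduct. Comparability then means having the same irreducible reduct.

  For the trace: by (CK1), \<open>q\<^sup>* s\<close> vanishes unless one of \<open>q\<close>, \<open>s\<close> extends the other by a path \<open>u\<close>,
  in which case it is \<open>u\<close> or \<open>u\<^sup>*\<close>. So \<open>p q\<^sup>* s r\<^sup>*\<close> is \<open>(p u) r\<^sup>*\<close> with \<open>s = q u\<close>, or \<open>p (r u)\<^sup>*\<close>
  with \<open>q = s u\<close>, and a canonical trace is nonzero on it only if \<open>r = p u\<close>, resp. \<open>p = r u\<close>: one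
  of the two pairs reduces to the other.\<close>

section \<open>Paths as walks\<close>

fun walk :: "('v, 'e) graph \<Rightarrow> 'v \<Rightarrow> 'e list \<Rightarrow> bool" where
  "walk E v [] \<longleftrightarrow> v \<in> verts E"
| "walk E v (e # es) \<longleftrightarrow> v \<in> verts E \<and> e \<in> edges E \<and> src E e = v \<and> walk E (rng E e) es"

fun walk_end :: "('v, 'e) graph \<Rightarrow> 'v \<Rightarrow> 'e list \<Rightarrow> 'v" where
  "walk_end E v [] = v"
| "walk_end E v (e # es) = walk_end E (rng E e) es"

fun path_edges :: "('v, 'e) path \<Rightarrow> 'e list" where
  "path_edges (PV v) = []"
| "path_edges (PE es) = es"

definition path_of_walk :: "'v \<Rightarrow> 'e list \<Rightarrow> ('v, 'e) path" where
  "path_of_walk v es = (if es = [] then PV v else PE es)"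

lemma walk_imp_vertex: "walk E v es \<Longrightarrow> v \<in> verts E"
  by (cases es) auto

lemma walk_append: "walk E v (es @ fs) \<longleftrightarrow> walk E v es \<and> walk E (walk_end E v es) fs"
  by (induction es arbitrary: v) (auto dest: walk_imp_vertex)

lemma walk_end_append: "walk_end E v (es @ fs) = walk_end E (walk_end E v es) fs"
  by (induction es arbitrary: v) auto

lemma walk_end_eq_rng_last: "es \<noteq> [] \<Longrightarrow> walk_end E v es = rng E (last es)"
  by (induction es arbitrary: v) auto

lemma walk_iff_successively:
  "wf_graph E \<Longrightarrow> walk E v es \<longleftrightarrow> v \<in> verts E \<and> set es \<subseteq> edges E \<and>
     successively (\<lambda>e f. rng E e = src E f) es \<and> (es \<noteq> [] \<longrightarrow> src E (hd es) = v)"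
  by (induction es arbitrary: v) (auto simp: wf_graph_def successively_Cons)

lemma is_path_PE_iff_walk:
  assumes "wf_graph E"
  shows "is_path E (PE es) \<longleftrightarrow> es \<noteq> [] \<and> walk E (src E (hd es)) es"
proof -
  have "is_path E (PE es) \<longleftrightarrow>
      es \<noteq> [] \<and> set es \<subseteq> edges E \<and> successively (\<lambda>e f. rng E e = src E f) es"
    by (simp add: successively_conv_nth)
  then show ?thesis
    using assms by (auto simp: walk_iff_successively wf_graph_def) (use hd_in_set in blast)
qed

lemma is_path_iff_walk:
  "wf_graph E \<Longrightarrow> is_path E p \<longleftrightarrow> p \<noteq> PE [] \<and> walk E (psrc E p) (path_edges p)"
  by (cases p) (simp_all del: is_path.simps(2) add: is_path_PE_iff_walk)

lemma prng_eq_walk_end: "is_path E p \<Longrightarrow> prng E p = walk_end E (psrc E p) (path_edges p)"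
  by (cases p) (auto simp: walk_end_eq_rng_last)

lemma path_edges_path_of_walk [simp]: "path_edges (path_of_walk v es) = es"
  by (simp add: path_of_walk_def)

lemma psrc_path_of_walk [simp]: "walk E v es \<Longrightarrow> psrc E (path_of_walk v es) = v"
  by (cases es) (auto simp: path_of_walk_def)

lemma prng_path_of_walk: "walk E v es \<Longrightarrow> prng E (path_of_walk v es) = walk_end E v es"
  by (cases es) (auto simp: path_of_walk_def walk_end_eq_rng_last)

lemma is_path_path_of_walk: "wf_graph E \<Longrightarrow> walk E v es \<Longrightarrow> is_path E (path_of_walk v es)"
  by (cases es) (auto simp del: is_path.simps(2) simp add: is_path_PE_iff_walk path_of_walk_def)

lemma path_of_walk_path: "is_path E p \<Longrightarrow> path_of_walk (psrc E p) (path_edges p) = p"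
  by (cases p) (auto simp: path_of_walk_def)

lemma path_eqI:
  "is_path E p \<Longrightarrow> is_path E p' \<Longrightarrow> psrc E p = psrc E p' \<Longrightarrow> path_edges p = path_edges p' \<Longrightarrow> p = p'"
  by (metis path_of_walk_path)

lemma pconc_eq_path_of_walk:
  "is_path E p \<Longrightarrow> is_path E u \<Longrightarrow> psrc E u = prng E p \<Longrightarrow>
   pconc p u = path_of_walk (psrc E p) (path_edges p @ path_edges u)"
  by (cases p; cases u) (auto simp: path_of_walk_def)

lemma walk_pconc:
  "wf_graph E \<Longrightarrow> is_path E p \<Longrightarrow> is_path E u \<Longrightarrow> psrc E u = prng E p \<Longrightarrow>
   walk E (psrc E p) (path_edges p @ path_edges u)"
  by (simp add: walk_append is_path_iff_walk prng_eq_walk_end)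

lemma is_path_pconc:
  "wf_graph E \<Longrightarrow> is_path E p \<Longrightarrow> is_path E u \<Longrightarrow> psrc E u = prng E p \<Longrightarrow> is_path E (pconc p u)"
  by (simp add: pconc_eq_path_of_walk is_path_path_of_walk walk_pconc)

lemma prng_pconc:
  "wf_graph E \<Longrightarrow> is_path E p \<Longrightarrow> is_path E u \<Longrightarrow> psrc E u = prng E p \<Longrightarrow> prng E (pconc p u) = prng E u"
  by (simp add: pconc_eq_path_of_walk prng_path_of_walk walk_pconc walk_end_append prng_eq_walk_end)

lemma path_edges_pconc: "path_edges (pconc p u) = path_edges p @ path_edges u"
  by (cases p; cases u) auto

lemma psrc_pconc: "is_path E p \<Longrightarrow> psrc E u = prng E p \<Longrightarrow> psrc E (pconc p u) = psrc E p"
  by (cases p; cases u) auto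

lemma pconc_eqI:
  "wf_graph E \<Longrightarrow> is_path E p \<Longrightarrow> is_path E u \<Longrightarrow> psrc E u = prng E p \<Longrightarrow>
   is_path E w \<Longrightarrow> psrc E w = psrc E p \<Longrightarrow> path_edges w = path_edges p @ path_edges u \<Longrightarrow>
   pconc p u = w"
  by (metis path_eqI is_path_pconc psrc_pconc path_edges_pconc)

lemma ex_path_extension:
  assumes "wf_graph E" "is_path E p" "walk E (psrc E p) (path_edges p @ ws)"
  obtains u where "is_path E u" "psrc E u = prng E p" "path_edges u = ws"
proof
  have "walk E (prng E p) ws"
    using assms by (simp add: walk_append prng_eq_walk_end)
  then show "is_path E (path_of_walk (prng E p) ws)" "psrc E (path_of_walk (prng E p) ws) = prng E p"
    using assms(1) by (simp_all add: is_path_path_of_walk)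
qed simp

section \<open>Reduction and comparability\<close>

lemma reduces_iff_common_suffix:
  assumes wf: "wf_graph E"
  shows "reduces E x y \<longleftrightarrow> x \<in> GE E \<and> y \<in> GE E \<and>
    psrc E (fst x) = psrc E (fst y) \<and> psrc E (snd x) = psrc E (snd y) \<and>
    (\<exists>ws. path_edges (fst x) = path_edges (fst y) @ ws \<and> path_edges (snd x) = path_edges (snd y) @ ws)"
    (is "_ \<longleftrightarrow> ?rhs")
proof
  assume "reduces E x y"
  then obtain p q u where y: "y = (p, q)" and pq: "(p, q) \<in> GE E"
    and u: "is_path E u" "psrc E u = prng E p" and x: "x = (pconc p u, pconc q u)"
    unfolding reduces_def by (cases y) auto
  have "is_path E p" "is_path E q" "prng E q = prng E p"
    using pq by (auto simp: GE_def)
  then show ?rhs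
    using x y pq u wf by (simp add: GE_def is_path_pconc prng_pconc psrc_pconc path_edges_pconc)
next
  assume ?rhs
  then obtain p q p' q' ws where x: "x = (p', q')" and y: "y = (p, q)"
    and GE: "(p', q') \<in> GE E" "(p, q) \<in> GE E" and src: "psrc E p' = psrc E p" "psrc E q' = psrc E q"
    and ws: "path_edges p' = path_edges p @ ws" "path_edges q' = path_edges q @ ws"
    by (cases x, cases y) auto
  have paths: "is_path E p" "is_path E q" "is_path E p'" "is_path E q'" "prng E q = prng E p"
    using GE by (auto simp: GE_def)
  obtain u where u: "is_path E u" "psrc E u = prng E p" "path_edges u = ws"
    using ex_path_extension[OF wf paths(1), of ws] paths(3) src ws wf by (metis is_path_iff_walk)
  have "pconc p u = p'" "pconc q u = q'"
    using pconc_eqI[OF wf] paths u src ws by metis+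
  then show "reduces E x y"
    unfolding reduces_def using x y GE u by auto
qed

lemma reduces_imp_GE: "wf_graph E \<Longrightarrow> reduces E x y \<Longrightarrow> x \<in> GE E \<and> y \<in> GE E"
  by (simp add: reduces_iff_common_suffix)

lemma reduces_refl: "wf_graph E \<Longrightarrow> x \<in> GE E \<Longrightarrow> reduces E x x"
  by (simp add: reduces_iff_common_suffix)

lemma reduces_trans: "wf_graph E \<Longrightarrow> reduces E x y \<Longrightarrow> reduces E y z \<Longrightarrow> reduces E x z"
  unfolding reduces_iff_common_suffix by (metis append.assoc)

lemma reduces_length_less:
  assumes "wf_graph E" "reduces E x y" "y \<noteq> x"
  shows "length (path_edges (fst y)) < length (path_edges (fst x))"
proof -
  obtain ws where
    ws: "path_edges (fst x) = path_edges (fst y) @ ws" "path_edges (snd x) = path_edges (snd y) @ ws"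
    using assms(1,2) reduces_iff_common_suffix by blast
  have "ws \<noteq> []"
  proof
    assume "ws = []"
    then have "fst y = fst x" "snd y = snd x"
      using assms(1,2) ws by (auto simp: reduces_iff_common_suffix GE_def intro: path_eqI)
    then show False
      using \<open>y \<noteq> x\<close> by (simp add: prod_eq_iff)
  qed
  then show ?thesis
    using ws by simp
qed

lemma append_eq_append_suffix:
  assumes "xs @ w = ys @ w'" "length w \<le> length w'"
  shows "\<exists>u. xs = ys @ u \<and> w' = u @ w"
proof -
  obtain us where "xs = ys @ us \<and> us @ w = w' \<or> xs @ us = ys \<and> w = us @ w'"
    using assms(1) append_eq_append_conv2 by blast
  then show ?thesis
    using assms(2) by auto
qed

lemma reduces_between_reducts:
  assumes wf: "wf_graph E" and xy: "reduces E x y" and xz: "reduces E x z"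
    and shorter: "length (path_edges (fst z)) \<le> length (path_edges (fst y))"
  shows "reduces E y z"
proof -
  obtain wy wz where
    wy: "path_edges (fst x) = path_edges (fst y) @ wy" "path_edges (snd x) = path_edges (snd y) @ wy" and
    wz: "path_edges (fst x) = path_edges (fst z) @ wz" "path_edges (snd x) = path_edges (snd z) @ wz"
    using xy xz unfolding reduces_iff_common_suffix[OF wf] by blast
  have fst_eq: "path_edges (fst y) @ wy = path_edges (fst z) @ wz"
    and snd_eq: "path_edges (snd y) @ wy = path_edges (snd z) @ wz"
    using wy wz by simp_all
  have "length wy \<le> length wz"
    using arg_cong[where f=length, OF fst_eq] shorter by simp
  then obtain u u' where
    u: "path_edges (fst y) = path_edges (fst z) @ u" "wz = u @ wy" and
    u': "path_edges (snd y) = path_edges (snd z) @ u'" "wz = u' @ wy"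
    using append_eq_append_suffix[OF fst_eq] append_eq_append_suffix[OF snd_eq] by blast
  have "u' = u"
    using u(2) u'(2) by simp
  then show ?thesis
    using xy xz u u' unfolding reduces_iff_common_suffix[OF wf] by auto
qed

lemma reduces_linear: "wf_graph E \<Longrightarrow> reduces E x y \<Longrightarrow> reduces E x z \<Longrightarrow> reduces E y z \<or> reduces E z y"
  by (meson nat_le_linear reduces_between_reducts)

lemma irreducible_reduct_unique:
  "wf_graph E \<Longrightarrow> reduces E x z \<Longrightarrow> reduces E x z' \<Longrightarrow> irreducible E z \<Longrightarrow> irreducible E z' \<Longrightarrow> z = z'"
  using reduces_linear unfolding irreducible_def by metis

lemma ex_irreducible_reduct:
  assumes "wf_graph E" "x \<in> GE E"
  shows "\<exists>z. irreducible E z \<and> reduces E x z"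
  using assms(2)
proof (induction "length (path_edges (fst x))" arbitrary: x rule: less_induct)
  case less
  show ?case
  proof (cases "irreducible E x")
    case True
    then show ?thesis
      using reduces_refl assms(1) less.prems by blast
  next
    case False
    then obtain y where "reduces E x y" "y \<noteq> x"
      using less.prems unfolding irreducible_def by blast
    moreover from this obtain z where "irreducible E z" "reduces E y z"
      using less.hyps reduces_length_less reduces_imp_GE assms(1) by metis
    ultimately show ?thesis
      using reduces_trans assms(1) by blast
  qed
qed

lemma comparable_iff_common_reduct: "comparable E x y \<longleftrightarrow> (\<exists>z. reduces E x z \<and> reduces E y z)"
  unfolding comparable_def reduces_def by fastforce

lemma comparable_iff_common_irreducible_reduct:
  "wf_graph E \<Longrightarrow> comparable E x y \<longleftrightarrow> (\<exists>z. irreducible E z \<and> reduces E x z \<and> reduces E y z)"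
  unfolding comparable_iff_common_reduct
  by (meson ex_irreducible_reduct reduces_imp_GE reduces_trans irreducible_def)

lemma equiv_comparable_rel:
  assumes wf: "wf_graph E"
  shows "equiv (GE E) (comparable_rel E)"
proof (rule equivI)
  show "comparable_rel E \<subseteq> GE E \<times> GE E"
    by (auto simp: comparable_rel_def)
  show "refl_on (GE E) (comparable_rel E)"
    by (auto simp: refl_on_def comparable_rel_def comparable_iff_common_reduct intro: reduces_refl[OF wf])
  show "sym (comparable_rel E)"
    by (auto simp: sym_def comparable_rel_def comparable_iff_common_reduct)
  show "trans (comparable_rel E)"
    unfolding trans_def comparable_rel_def comparable_iff_common_irreducible_reduct[OF wf]
    using irreducible_reduct_unique[OF wf] by blast
qed

lemma ex1_irreducible_reduct_of_class:
  assumes wf: "wf_graph E" and "C \<in> GE E // comparable_rel E"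
  shows "\<exists>!z. irreducible E z \<and> (\<forall>x\<in>C. reduces E x z)"
proof -
  obtain x where x: "x \<in> GE E" and C: "C = comparable_rel E `` {x}"
    using assms(2) by (rule quotientE)
  obtain z where z: "irreducible E z" "reduces E x z"
    using ex_irreducible_reduct[OF wf x] by blast
  have "x \<in> C"
    using C equiv_class_self[OF equiv_comparable_rel[OF wf] x] by simp
  moreover have "reduces E y z" if "y \<in> C" for y
    using that C z irreducible_reduct_unique[OF wf]
    unfolding comparable_rel_def comparable_iff_common_irreducible_reduct[OF wf] by blast
  ultimately show ?thesis
    using z irreducible_reduct_unique[OF wf] by blast
qed

section \<open>Path elements in a Leavitt family\<close>

text \<open>\<open>walk_el E Pv Se v [e\<^sub>1, \<dots>, e\<^sub>n]\<close> is \<open>e\<^sub>1 \<cdots> e\<^sub>n w\<close> with \<open>w\<close> the endpoint; the trailing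
  vertex, absorbed by (E1), keeps the recursion uniform down to the empty walk.\<close>

fun walk_el :: "('v, 'e) graph \<Rightarrow> ('v \<Rightarrow> 'a::ring) \<Rightarrow> ('e \<Rightarrow> 'a) \<Rightarrow> 'v \<Rightarrow> 'e list \<Rightarrow> 'a" where
  "walk_el E Pv Se v [] = Pv v"
| "walk_el E Pv Se v (e # es) = Se e * walk_el E Pv Se (rng E e) es"

fun walk_ghost :: "('v, 'e) graph \<Rightarrow> ('v \<Rightarrow> 'a::ring) \<Rightarrow> ('e \<Rightarrow> 'a) \<Rightarrow> 'v \<Rightarrow> 'e list \<Rightarrow> 'a" where
  "walk_ghost E Pv Ss v [] = Pv v"
| "walk_ghost E Pv Ss v (e # es) = walk_ghost E Pv Ss (rng E e) es * Ss e"

lemma foldl_mult_left: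
  "foldl (\<lambda>a f. a * g f) (x * y) fs = x * foldl (\<lambda>a f. a * g f) y fs" for x y :: "'a::semigroup_mult"
  by (induction fs arbitrary: y) (auto simp: mult.assoc)

lemma foldl_mult_right:
  "foldl (\<lambda>a f. g f * a) (y * x) fs = foldl (\<lambda>a f. g f * a) y fs * x" for x y :: "'a::semigroup_mult"
  by (induction fs arbitrary: y) (auto simp: mult.assoc[symmetric])

lemma pel_PE_Cons: "pel Pv Se (PE (e # es)) = (if es = [] then Se e else Se e * pel Pv Se (PE es))"
  by (cases es) (simp_all add: foldl_mult_left[symmetric])

lemma pstar_PE_Cons: "pstar Pv Ss (PE (e # es)) = (if es = [] then Ss e else pstar Pv Ss (PE es) * Ss e)"
  by (cases es) (simp_all add: foldl_mult_right[symmetric])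

lemma pel_path_of_walk:
  "leavitt_family E Pv Se Ss \<Longrightarrow> walk E v es \<Longrightarrow> pel Pv Se (path_of_walk v es) = walk_el E Pv Se v es"
proof (induction es arbitrary: v)
  case (Cons e es)
  then show ?case
    by (cases "es = []")
      (auto simp: path_of_walk_def pel_PE_Cons leavitt_family_def simp del: pel.simps(3))
qed (simp add: path_of_walk_def)

lemma pstar_path_of_walk:
  "leavitt_family E Pv Se Ss \<Longrightarrow> walk E v es \<Longrightarrow> pstar Pv Ss (path_of_walk v es) = walk_ghost E Pv Ss v es"
proof (induction es arbitrary: v)
  case (Cons e es)
  then show ?case
    by (cases "es = []")
      (auto simp: path_of_walk_def pstar_PE_Cons leavitt_family_def simp del: pstar.simps(3))
qed (simp add: path_of_walk_def)

lemma vertex_mult_walk_el: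
  "leavitt_family E Pv Se Ss \<Longrightarrow> walk E v es \<Longrightarrow> Pv v * walk_el E Pv Se v es = walk_el E Pv Se v es"
  by (cases es) (auto simp: leavitt_family_def mult.assoc[symmetric])

lemma walk_ghost_mult_vertex:
  "leavitt_family E Pv Se Ss \<Longrightarrow> walk E v es \<Longrightarrow> walk_ghost E Pv Ss v es * Pv v = walk_ghost E Pv Ss v es"
  by (cases es) (auto simp: leavitt_family_def mult.assoc)

lemma walk_el_append:
  "leavitt_family E Pv Se Ss \<Longrightarrow> walk E v (es @ fs) \<Longrightarrow>
   walk_el E Pv Se v (es @ fs) = walk_el E Pv Se v es * walk_el E Pv Se (walk_end E v es) fs"
  by (induction es arbitrary: v) (auto simp: vertex_mult_walk_el mult.assoc)

lemma walk_ghost_append: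
  "leavitt_family E Pv Se Ss \<Longrightarrow> walk E v (es @ fs) \<Longrightarrow>
   walk_ghost E Pv Ss v (es @ fs) = walk_ghost E Pv Ss (walk_end E v es) fs * walk_ghost E Pv Ss v es"
  by (induction es arbitrary: v) (auto simp: walk_ghost_mult_vertex mult.assoc)

lemma leavitt_family_vertex_orth:
  "leavitt_family E Pv Se Ss \<Longrightarrow> v \<in> verts E \<Longrightarrow> w \<in> verts E \<Longrightarrow> v \<noteq> w \<Longrightarrow> Pv v * Pv w = 0"
  by (simp add: leavitt_family_def)

lemma leavitt_family_ghost_mult_edge:
  "leavitt_family E Pv Se Ss \<Longrightarrow> e \<in> edges E \<Longrightarrow> f \<in> edges E \<Longrightarrow>
   Ss e * Se f = (if e = f then Pv (rng E e) else 0)"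
  by (simp add: leavitt_family_def)

lemma walk_ghost_mult_walk_el_distinct:
  assumes lf: "leavitt_family E Pv Se Ss" and "walk E v es" "walk E w fs" "v \<noteq> w"
  shows "walk_ghost E Pv Ss v es * walk_el E Pv Se w fs = 0"
proof -
  have "walk_ghost E Pv Ss v es * walk_el E Pv Se w fs =
      (walk_ghost E Pv Ss v es * Pv v) * (Pv w * walk_el E Pv Se w fs)"
    by (simp only: walk_ghost_mult_vertex[OF lf assms(2)] vertex_mult_walk_el[OF lf assms(3)])
  also have "\<dots> = walk_ghost E Pv Ss v es * (Pv v * Pv w) * walk_el E Pv Se w fs"
    by (simp add: mult.assoc)
  also have "Pv v * Pv w = 0"
    using leavitt_family_vertex_orth[OF lf walk_imp_vertex walk_imp_vertex] assms(2-4) .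
  finally show ?thesis
    by simp
qed

lemma walk_ghost_mult_walk_el_Cons:
  assumes lf: "leavitt_family E Pv Se Ss" and "walk E v (e # es)" "walk E v (f # fs)"
  shows "walk_ghost E Pv Ss v (e # es) * walk_el E Pv Se v (f # fs) =
    (if e = f then walk_ghost E Pv Ss (rng E e) es * walk_el E Pv Se (rng E e) fs else 0)"
proof -
  have "walk_ghost E Pv Ss v (e # es) * walk_el E Pv Se v (f # fs) =
      walk_ghost E Pv Ss (rng E e) es * (Ss e * Se f) * walk_el E Pv Se (rng E f) fs"
    by (simp add: mult.assoc)
  also have "\<dots> = (if e = f then walk_ghost E Pv Ss (rng E e) es * Pv (rng E e) * walk_el E Pv Se (rng E e) fs else 0)"
    using leavitt_family_ghost_mult_edge[OF lf] assms(2,3) by simp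
  also have "\<dots> = (if e = f then walk_ghost E Pv Ss (rng E e) es * walk_el E Pv Se (rng E e) fs else 0)"
    using walk_ghost_mult_vertex[OF lf, of "rng E e" es] assms(2) by auto
  finally show ?thesis .
qed

lemma walk_ghost_mult_walk_el:
  assumes lf: "leavitt_family E Pv Se Ss" and "walk E v es" "walk E v fs"
    and "walk_ghost E Pv Ss v es * walk_el E Pv Se v fs \<noteq> 0"
  shows "(\<exists>ws. fs = es @ ws \<and>
           walk_ghost E Pv Ss v es * walk_el E Pv Se v fs = walk_el E Pv Se (walk_end E v es) ws)
       \<or> (\<exists>ws. es = fs @ ws \<and>
           walk_ghost E Pv Ss v es * walk_el E Pv Se v fs = walk_ghost E Pv Ss (walk_end E v fs) ws)"
  using assms(2-)
proof (induction es arbitrary: v fs)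
  case Nil
  show ?case
    by (intro disjI1 exI[of _ fs]) (simp add: vertex_mult_walk_el[OF lf Nil.prems(2)])
next
  case (Cons e es)
  show ?case
  proof (cases fs)
    case Nil
    show ?thesis
      by (intro disjI2 exI[of _ "e # es"])
        (simp add: local.Nil walk_ghost_mult_vertex[OF lf Cons.prems(1)] del: walk_ghost.simps(2))
  next
    case (Cons f fs')
    have prod: "walk_ghost E Pv Ss v (e # es) * walk_el E Pv Se v fs =
        (if e = f then walk_ghost E Pv Ss (rng E e) es * walk_el E Pv Se (rng E e) fs' else 0)"
      unfolding local.Cons by (rule walk_ghost_mult_walk_el_Cons[OF lf Cons.prems(1,2)[unfolded local.Cons]])
    have "e = f"
      using Cons.prems(3) prod by metis
    then have nz: "walk_ghost E Pv Ss (rng E e) es * walk_el E Pv Se (rng E e) fs' \<noteq> 0"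
      using Cons.prems(3) prod by metis
    have "walk E (rng E e) es" "walk E (rng E e) fs'"
      using Cons.prems(1,2) local.Cons \<open>e = f\<close> by auto
    from Cons.IH[OF this nz] show ?thesis
      using prod local.Cons \<open>e = f\<close>
      by (auto simp del: walk_ghost.simps(2) walk_el.simps(2))
  qed
qed

lemma pel_eq_walk_el:
  "wf_graph E \<Longrightarrow> leavitt_family E Pv Se Ss \<Longrightarrow> is_path E p \<Longrightarrow>
   pel Pv Se p = walk_el E Pv Se (psrc E p) (path_edges p)"
  by (metis is_path_iff_walk path_of_walk_path pel_path_of_walk)

lemma pstar_eq_walk_ghost:
  "wf_graph E \<Longrightarrow> leavitt_family E Pv Se Ss \<Longrightarrow> is_path E p \<Longrightarrow>
   pstar Pv Ss p = walk_ghost E Pv Ss (psrc E p) (path_edges p)"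
  by (metis is_path_iff_walk path_of_walk_path pstar_path_of_walk)

lemma pel_pconc:
  assumes "wf_graph E" "leavitt_family E Pv Se Ss" "is_path E p" "is_path E u" "psrc E u = prng E p"
  shows "pel Pv Se (pconc p u) = pel Pv Se p * pel Pv Se u"
  using assms walk_pconc[OF assms(1,3-5)]
  by (simp add: pconc_eq_path_of_walk pel_path_of_walk walk_el_append pel_eq_walk_el prng_eq_walk_end)

lemma pstar_pconc:
  assumes "wf_graph E" "leavitt_family E Pv Se Ss" "is_path E p" "is_path E u" "psrc E u = prng E p"
  shows "pstar Pv Ss (pconc p u) = pstar Pv Ss u * pstar Pv Ss p"
  using assms walk_pconc[OF assms(1,3-5)]
  by (simp add: pconc_eq_path_of_walk pstar_path_of_walk walk_ghost_append pstar_eq_walk_ghost prng_eq_walk_end)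

lemma pstar_mult_pel_cases:
  assumes wf: "wf_graph E" and lf: "leavitt_family E Pv Se Ss" and q: "is_path E q" and s: "is_path E s"
    and nz: "pstar Pv Ss q * pel Pv Se s \<noteq> 0"
  obtains (extends) u where "is_path E u" "psrc E u = prng E q" "s = pconc q u"
      "pstar Pv Ss q * pel Pv Se s = pel Pv Se u"
  | (extended) u where "is_path E u" "psrc E u = prng E s" "q = pconc s u"
      "pstar Pv Ss q * pel Pv Se s = pstar Pv Ss u"
proof -
  define v Q w S where "v = psrc E q" "Q = path_edges q" "w = psrc E s" "S = path_edges s"
  have walks: "walk E v Q" "walk E w S"
    using wf q s by (simp_all add: v_Q_w_S_def is_path_iff_walk)
  have prod: "pstar Pv Ss q * pel Pv Se s = walk_ghost E Pv Ss v Q * walk_el E Pv Se w S"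
    using wf lf q s by (simp add: v_Q_w_S_def pel_eq_walk_el pstar_eq_walk_ghost)
  then have "v = w"
    using nz walk_ghost_mult_walk_el_distinct[OF lf walks] by auto
  with nz prod have "walk_ghost E Pv Ss v Q * walk_el E Pv Se v S \<noteq> 0"
    by simp
  with walk_ghost_mult_walk_el[OF lf walks(1)] walks(2) \<open>v = w\<close> consider
      (prefix) ws where "S = Q @ ws" "pstar Pv Ss q * pel Pv Se s = walk_el E Pv Se (walk_end E v Q) ws"
    | (suffix) ws where "Q = S @ ws" "pstar Pv Ss q * pel Pv Se s = walk_ghost E Pv Ss (walk_end E w S) ws"
    using prod by metis
  then show ?thesis
  proof cases
    case prefix
    obtain u where u: "is_path E u" "psrc E u = prng E q" "path_edges u = ws"
      using ex_path_extension[OF wf q, of ws] walks(2) \<open>v = w\<close> prefix(1) v_Q_w_S_def by auto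
    then have "s = pconc q u"
      using pconc_eqI[OF wf q u(1,2) s] \<open>v = w\<close> prefix(1) v_Q_w_S_def by simp
    moreover have "pel Pv Se u = walk_el E Pv Se (walk_end E v Q) ws"
      using pel_eq_walk_el[OF wf lf u(1)] u prng_eq_walk_end[OF q] v_Q_w_S_def by simp
    ultimately show ?thesis
      using extends u prefix(2) by simp
  next
    case suffix
    obtain u where u: "is_path E u" "psrc E u = prng E s" "path_edges u = ws"
      using ex_path_extension[OF wf s, of ws] walks(1) \<open>v = w\<close> suffix(1) v_Q_w_S_def by auto
    then have "q = pconc s u"
      using pconc_eqI[OF wf s u(1,2) q] \<open>v = w\<close> suffix(1) v_Q_w_S_def by simp
    moreover have "pstar Pv Ss u = walk_ghost E Pv Ss (walk_end E w S) ws"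
      using pstar_eq_walk_ghost[OF wf lf u(1)] u prng_eq_walk_end[OF s] v_Q_w_S_def by simp
    ultimately show ?thesis
      using extended u suffix(2) by simp
  qed
qed

lemma is_trace_zero: "is_trace t \<Longrightarrow> t 0 = 0"
  unfolding is_trace_def by (metis add_cancel_right_right add.right_neutral)

lemma canonical_trace_nonzero_imp_eq:
  "canonical_trace E Pv Se Ss t \<Longrightarrow> is_path E p \<Longrightarrow> is_path E q \<Longrightarrow> prng E p = prng E q \<Longrightarrow>
   t (pel Pv Se p * pstar Pv Ss q) \<noteq> 0 \<Longrightarrow> p = q"
  unfolding canonical_trace_def by metis

lemma comparable_if_canonical_trace_nonzero:
  assumes wf: "wf_graph E" and lf: "leavitt_family E Pv Se Ss" and ct: "canonical_trace E Pv Se Ss t"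
    and pq: "(p, q) \<in> GE E" and rs: "(r, s) \<in> GE E"
    and nz: "t (pel Pv Se p * pstar Pv Ss q * (pel Pv Se s * pstar Pv Ss r)) \<noteq> 0"
  shows "comparable E (p, q) (r, s)"
proof -
  have paths: "is_path E p" "is_path E q" "is_path E r" "is_path E s"
    and ends: "prng E p = prng E q" "prng E r = prng E s"
    using pq rs by (auto simp: GE_def)
  have regroup: "pel Pv Se p * pstar Pv Ss q * (pel Pv Se s * pstar Pv Ss r) =
      pel Pv Se p * (pstar Pv Ss q * pel Pv Se s) * pstar Pv Ss r"
    by (simp add: mult.assoc)
  have "pstar Pv Ss q * pel Pv Se s \<noteq> 0"
    using nz regroup is_trace_zero ct by (fastforce simp: canonical_trace_def)
  then show ?thesis
  proof (cases rule: pstar_mult_pel_cases[OF wf lf paths(2,4), consumes 1, case_names extends extended])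
    case (extends u)
    then have "pel Pv Se p * pstar Pv Ss q * (pel Pv Se s * pstar Pv Ss r) =
        pel Pv Se (pconc p u) * pstar Pv Ss r"
      using regroup pel_pconc[OF wf lf paths(1)] ends(1) by simp
    then have "pconc p u = r"
      using nz extends canonical_trace_nonzero_imp_eq[OF ct is_path_pconc[OF wf paths(1)] paths(3)]
        prng_pconc[OF wf paths(1)] ends prng_pconc[OF wf paths(2)] paths(2) by simp
    then have "reduces E (r, s) (p, q)"
      unfolding reduces_def using pq extends ends(1) by auto
    then show ?thesis
      using comparable_iff_common_reduct reduces_refl[OF wf pq] by blast
  next
    case (extended u)
    then have "pel Pv Se p * pstar Pv Ss q * (pel Pv Se s * pstar Pv Ss r) =
        pel Pv Se p * pstar Pv Ss (pconc r u)"
      using regroup pstar_pconc[OF wf lf paths(3)] ends(2) by (simp add: mult.assoc)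
    then have "p = pconc r u"
      using nz extended canonical_trace_nonzero_imp_eq[OF ct paths(1) is_path_pconc[OF wf paths(3)]]
        prng_pconc[OF wf paths(3)] ends prng_pconc[OF wf paths(4)] paths(4) by simp
    then have "reduces E (p, q) (r, s)"
      unfolding reduces_def using rs extended ends(2) by auto
    then show ?thesis
      using comparable_iff_common_reduct reduces_refl[OF wf rs] by blast
  qed
qed

theorem lemma3p2:
  fixes E :: "('v, 'e) graph"
  assumes "wf_graph E"
  shows
    "(\<forall>x\<in>GE E. \<exists>!z. irreducible E z \<and> reduces E x z)
   \<and> (\<forall>x\<in>GE E. \<forall>y\<in>GE E.
        (comparable E x y \<longleftrightarrow> (\<exists>z. irreducible E z \<and> reduces E x z \<and> reduces E y z))
      \<and> (comparable E x y \<longrightarrow> (\<exists>!z. irreducible E z \<and> reduces E x z \<and> reduces E y z)))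
   \<and> equiv (GE E) (comparable_rel E)
   \<and> (\<forall>C\<in>GE E // comparable_rel E. \<exists>!z. irreducible E z \<and> (\<forall>x\<in>C. reduces E x z))
   \<and> (\<forall>(Pv :: 'v \<Rightarrow> 'a::ring) Se Ss (t :: 'a \<Rightarrow> 'b::ab_group_add) p q r s.
        leavitt_family E Pv Se Ss \<longrightarrow> canonical_trace E Pv Se Ss t \<longrightarrow>
        (p, q) \<in> GE E \<longrightarrow> (r, s) \<in> GE E \<longrightarrow>
        t (pel Pv Se p * pstar Pv Ss q * (pel Pv Se s * pstar Pv Ss r)) \<noteq> 0 \<longrightarrow>
        comparable E (p, q) (r, s))"
proof (intro conjI ballI allI impI)
  show "\<exists>!z. irreducible E z \<and> reduces E x z" if "x \<in> GE E" for x
    using ex_irreducible_reduct[OF assms that] irreducible_reduct_unique[OF assms] by blast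
  show "comparable E x y \<longleftrightarrow> (\<exists>z. irreducible E z \<and> reduces E x z \<and> reduces E y z)" for x y
    by (rule comparable_iff_common_irreducible_reduct[OF assms])
  then show "\<exists>!z. irreducible E z \<and> reduces E x z \<and> reduces E y z" if "comparable E x y" for x y
    using that irreducible_reduct_unique[OF assms] by blast
  show "equiv (GE E) (comparable_rel E)"
    by (rule equiv_comparable_rel[OF assms])
  show "\<exists>!z. irreducible E z \<and> (\<forall>x\<in>C. reduces E x z)" if "C \<in> GE E // comparable_rel E" for C
    by (rule ex1_irreducible_reduct_of_class[OF assms that])
qed (rule comparable_if_canonical_trace_nonzero[OF assms])

end
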